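(* Let $(G_1,v_1)$ and $(G_2,v_2)$ be connected graphs with distinguished vertices whose path metrics are conditionally strictly negative definite. Then the path metric on the free product graph $G_1\ast G_2$ is conditionally strictly negative definite.
   Context: For rooted graphs $G_i=(V_i,E_i)$ with roots $v_i$ ($i=1,2$), the free product $G_1\ast G_2$ has vertex set consisting of the empty word $e$ and all words $s_1s_2\cdots s_m$ ($m\geq1$) with $s_k\in V_{i_k}\setminus\{v_{i_k}\}$ and $i_k\neq i_{k+1}$ for all $k$. Its edges are the pairs $\{wu,w'u\}$ where $\{w,w'\}\in E_i$ for some $i$, $u$ is such a word (possibly empty) whose first letter does not lie in $V_i$, and where $wu$ (resp. $w'u$) is read as $u$ if $w=v_i$ (resp. $w'=v_i$). The path metric of a connected graph is the shortest-path distance on its vertex set. A symmetric real function $K$ on $V\times V$ is conditionally strictly negative definite if for every finitely supported $\lambda\colon V\to\mathbb{C}$, $\lambda\neq0$, with $\sum_v\lambda(v)=0$ one has $\sum_{x,y}\lambda(x)\overline{\lambda(y)}K(x,y)<0$. *)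

theory Defs
  imports Complex_Main
begin

definition graph :: "'a set \<Rightarrow> 'a set set \<Rightarrow> bool" where
  "graph V E \<longleftrightarrow> (\<forall>e\<in>E. \<exists>x y. x \<noteq> y \<and> x \<in> V \<and> y \<in> V \<and> e = {x, y})"

definition walk :: "'a set set \<Rightarrow> 'a list \<Rightarrow> bool" where
  "walk E xs \<longleftrightarrow> xs \<noteq> [] \<and> (\<forall>i. Suc i < length xs \<longrightarrow> {xs ! i, xs ! Suc i} \<in> E)"

definition connected_graph :: "'a set \<Rightarrow> 'a set set \<Rightarrow> bool" where
  "connected_graph V E \<longleftrightarrow> V \<noteq> {} \<and>
     (\<forall>x\<in>V. \<forall>y\<in>V. \<exists>xs. walk E xs \<and> hd xs = x \<and> last xs = y)"

definition path_dist :: "'a set set \<Rightarrow> 'a \<Rightarrow> 'a \<Rightarrow> nat" where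
  "path_dist E x y = (LEAST n. \<exists>xs. walk E xs \<and> hd xs = x \<and> last xs = y \<and> length xs = Suc n)"

definition cond_strict_neg_def :: "'a set \<Rightarrow> ('a \<Rightarrow> 'a \<Rightarrow> real) \<Rightarrow> bool" where
  "cond_strict_neg_def V K \<longleftrightarrow>
     (\<forall>x\<in>V. \<forall>y\<in>V. K x y = K y x) \<and>
     (\<forall>lam :: 'a \<Rightarrow> complex.
        finite {x. lam x \<noteq> 0} \<longrightarrow> {x. lam x \<noteq> 0} \<subseteq> V \<longrightarrow> {x. lam x \<noteq> 0} \<noteq> {} \<longrightarrow>
        (\<Sum>x\<in>{x. lam x \<noteq> 0}. lam x) = 0 \<longrightarrow>
        (let q = (\<Sum>x\<in>{x. lam x \<noteq> 0}. \<Sum>y\<in>{x. lam x \<noteq> 0}.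
                    lam x * cnj (lam y) * complex_of_real (K x y))
         in q \<in> \<real> \<and> Re q < 0))"

text \<open>Free product of rooted graphs. Words are lists over Inl (letters of G1) and
  Inr (letters of G2); the empty word is the root e.\<close>
definition fp_vertices :: "'a set \<Rightarrow> 'a \<Rightarrow> 'b set \<Rightarrow> 'b \<Rightarrow> ('a + 'b) list set" where
  "fp_vertices V1 v1 V2 v2 =
     {w. (\<forall>c\<in>set w. case c of Inl s \<Rightarrow> s \<in> V1 - {v1} | Inr s \<Rightarrow> s \<in> V2 - {v2}) \<and>
         (\<forall>k. Suc k < length w \<longrightarrow> isl (w ! k) \<noteq> isl (w ! Suc k))}"

definition prefix1 :: "'a \<Rightarrow> 'a \<Rightarrow> ('a + 'b) list \<Rightarrow> ('a + 'b) list" where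
  "prefix1 v1 w u = (if w = v1 then u else Inl w # u)"

definition prefix2 :: "'b \<Rightarrow> 'b \<Rightarrow> ('a + 'b) list \<Rightarrow> ('a + 'b) list" where
  "prefix2 v2 w u = (if w = v2 then u else Inr w # u)"

definition fp_edges :: "'a set \<Rightarrow> 'a set set \<Rightarrow> 'a \<Rightarrow> 'b set \<Rightarrow> 'b set set \<Rightarrow> 'b
    \<Rightarrow> ('a + 'b) list set set" where
  "fp_edges V1 E1 v1 V2 E2 v2 =
     {{prefix1 v1 w u, prefix1 v1 w' u} | w w' u.
        {w, w'} \<in> E1 \<and> u \<in> fp_vertices V1 v1 V2 v2 \<and> (u = [] \<or> \<not> isl (hd u))}
   \<union> {{prefix2 v2 w u, prefix2 v2 w' u} | w w' u.
        {w, w'} \<in> E2 \<and> u \<in> fp_vertices V1 v1 V2 v2 \<and> (u = [] \<or> isl (hd u))}"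

end

theory Submission
  imports Defs "HOL-Library.Sublist"
begin

text \<open>
  Read a word of \<open>G1 * G2\<close> level by level: for each suffix \<open>u\<close>, the letter immediately
  preceding \<open>u\<close> is a vertex of \<open>G1\<close> or of \<open>G2\<close>; \<open>fp_proj1 v1 u x\<close> and \<open>fp_proj2 v2 u x\<close>
  are these vertices (the roots when the letter is missing or lies in the other factor).
  A walk in the free product changes one such letter at a time, and a geodesic from \<open>x\<close> to a
  word \<open>y\<close> that is no longer is obtained by moving the first letter of \<open>x\<close> inside its factor,
  either straight to the first letter of \<open>y\<close> (if the two words differ only there) or back to the
  root. Hence the path metric is the sum over all levels \<open>u\<close> of the distances in \<open>G1\<close> and
  \<open>G2\<close> between the projections at \<open>u\<close>.

  Consequently the quadratic form of \<open>lam\<close> splits into a sum over levels of quadratic forms of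
  the push-forwards of \<open>lam\<close> along the projections, each nonpositive by hypothesis. If \<open>c # u\<close>
  is a longest word in the support of \<open>lam\<close>, the push-forward at level \<open>u\<close> gives the vertex
  \<open>c\<close> the weight \<open>lam (c # u)\<close> alone, so that summand is strictly negative.
\<close>

lemma graph_edge_in_vertices: "graph V E \<Longrightarrow> {x, y} \<in> E \<Longrightarrow> x \<in> V \<and> y \<in> V"
  unfolding graph_def by (metis doubleton_eq_iff)

lemma walk_Cons_Cons: "walk E (a # b # xs) \<longleftrightarrow> {a, b} \<in> E \<and> walk E (b # xs)"
  unfolding walk_def by (auto simp: All_less_Suc2 less_Suc_eq_0_disj)

lemma walk_singleton [simp]: "walk E [x]"
  by (simp add: walk_def)

lemma walk_append:
  "walk E xs \<Longrightarrow> walk E ys \<Longrightarrow> last xs = hd ys \<Longrightarrow> walk E (xs @ tl ys)"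
proof (induction xs rule: induct_list012)
  case 1 then show ?case by (simp add: walk_def)
next
  case (2 x) then show ?case by (cases ys) auto
next
  case (3 x y zs) then show ?case by (simp add: walk_Cons_Cons)
qed

lemma walk_rev: "walk E xs \<Longrightarrow> walk E (rev xs)"
proof (induction xs rule: induct_list012)
  case (3 a b xs)
  then have "walk E (rev (b # xs))" "walk E [b, a]"
    by (simp_all add: walk_Cons_Cons insert_commute)
  from walk_append[OF this] show ?case by simp
qed simp_all

definition has_walk :: "'a set set \<Rightarrow> 'a \<Rightarrow> 'a \<Rightarrow> nat \<Rightarrow> bool" where
  "has_walk E x y n \<longleftrightarrow> (\<exists>xs. walk E xs \<and> hd xs = x \<and> last xs = y \<and> length xs = Suc n)"

lemma path_dist_eq_Least: "path_dist E x y = (LEAST n. has_walk E x y n)"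
  by (simp add: path_dist_def has_walk_def)

lemma has_walk_refl: "has_walk E x x 0"
  unfolding has_walk_def by (intro exI[of _ "[x]"]) simp

lemma has_walk_edge: "{x, y} \<in> E \<Longrightarrow> has_walk E x y 1"
  unfolding has_walk_def by (intro exI[of _ "[x, y]"]) (simp add: walk_Cons_Cons)

lemma has_walk_trans:
  assumes "has_walk E x y m" "has_walk E y z n"
  shows "has_walk E x z (m + n)"
proof -
  obtain xs ys where "walk E xs" "hd xs = x" "last xs = y" "length xs = Suc m"
    and "walk E ys" "hd ys = y" "last ys = z" "length ys = Suc n"
    using assms unfolding has_walk_def by blast
  moreover have "xs \<noteq> []" "ys \<noteq> []"
    using \<open>walk E xs\<close> \<open>walk E ys\<close> by (simp_all add: walk_def)
  moreover have "walk E (xs @ tl ys)"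
    using \<open>walk E xs\<close> \<open>walk E ys\<close> \<open>last xs = y\<close> \<open>hd ys = y\<close> by (simp add: walk_append)
  ultimately show ?thesis
    unfolding has_walk_def
    by (intro exI[of _ "xs @ tl ys"]) (cases ys; auto)
qed

lemma has_walk_sym: "has_walk E x y n \<Longrightarrow> has_walk E y x n"
  unfolding has_walk_def
  by (metis walk_rev walk_def hd_rev last_rev length_rev)

lemma has_walk_map:
  assumes "has_walk E x y n" and "\<And>a b. {a, b} \<in> E \<Longrightarrow> {f a, f b} \<in> E'"
  shows "has_walk E' (f x) (f y) n"
proof -
  obtain xs where xs: "walk E xs" "hd xs = x" "last xs = y" "length xs = Suc n"
    using assms(1) unfolding has_walk_def by blast
  then have "walk E' (map f xs)"
    using assms(2) unfolding walk_def by simp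
  with xs show ?thesis
    unfolding has_walk_def by (intro exI[of _ "map f xs"]) (auto simp: walk_def hd_map last_map)
qed

lemma path_dist_le: "has_walk E x y n \<Longrightarrow> path_dist E x y \<le> n"
  unfolding path_dist_eq_Least by (rule Least_le)

lemma has_walk_path_dist: "has_walk E x y n \<Longrightarrow> has_walk E x y (path_dist E x y)"
  unfolding path_dist_eq_Least by (rule LeastI)

lemma path_dist_eqI:
  "has_walk E x y n \<Longrightarrow> (\<And>m. has_walk E x y m \<Longrightarrow> n \<le> m) \<Longrightarrow> path_dist E x y = n"
  using path_dist_le has_walk_path_dist le_antisym by metis

lemma path_dist_commute: "path_dist E x y = path_dist E y x"
proof -
  have "has_walk E x y = has_walk E y x"
    by (auto intro: has_walk_sym)
  then show ?thesis
    by (simp add: path_dist_eq_Least)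
qed

lemma path_dist_refl [simp]: "path_dist E x x = 0"
  using path_dist_le[OF has_walk_refl] by simp

lemma path_dist_edge: "{x, y} \<in> E \<Longrightarrow> path_dist E x y \<le> 1"
  by (rule path_dist_le[OF has_walk_edge])

lemma connected_graph_has_walk:
  assumes "connected_graph V E" "x \<in> V" "y \<in> V"
  shows "has_walk E x y (path_dist E x y)"
proof -
  obtain xs where "walk E xs" "hd xs = x" "last xs = y"
    using assms unfolding connected_graph_def by blast
  then have "has_walk E x y (length xs - 1)"
    unfolding has_walk_def by (intro exI[of _ xs]) (auto simp: walk_def)
  then show ?thesis
    by (rule has_walk_path_dist)
qed

lemma path_dist_triangle:
  assumes "connected_graph V E" "x \<in> V" "y \<in> V" "z \<in> V"
  shows "path_dist E x z \<le> path_dist E x y + path_dist E y z"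
  using assms by (intro path_dist_le has_walk_trans[OF connected_graph_has_walk connected_graph_has_walk])

lemma has_walk_bound:
  fixes D :: "'a \<Rightarrow> 'a \<Rightarrow> nat"
  assumes edge: "\<And>a b. {a, b} \<in> E \<Longrightarrow> a \<in> V \<and> b \<in> V \<and> D a b \<le> 1"
    and refl: "\<And>a. a \<in> V \<Longrightarrow> D a a = 0"
    and triangle: "\<And>a b c. a \<in> V \<Longrightarrow> b \<in> V \<Longrightarrow> c \<in> V \<Longrightarrow> D a c \<le> D a b + D b c"
    and "has_walk E x y n" "x \<in> V"
  shows "D x y \<le> n"
proof -
  have "D (hd xs) (last xs) \<le> length xs - 1 \<and> last xs \<in> V" if "walk E xs" "hd xs \<in> V" for xs
    using that
  proof (induction xs rule: induct_list012)
    case (3 a b xs)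
    then have "{a, b} \<in> E" "walk E (b # xs)" by (simp_all add: walk_Cons_Cons)
    with 3 edge triangle show ?case by fastforce
  qed (simp_all add: walk_def refl)
  with assms(4,5) show ?thesis unfolding has_walk_def by fastforce
qed

definition qform :: "('x \<Rightarrow> complex) \<Rightarrow> 'x set \<Rightarrow> ('x \<Rightarrow> 'x \<Rightarrow> real) \<Rightarrow> complex" where
  "qform lam S K = (\<Sum>x\<in>S. \<Sum>y\<in>S. lam x * cnj (lam y) * of_real (K x y))"

lemma cond_strict_neg_defI:
  assumes "\<And>x y. x \<in> V \<Longrightarrow> y \<in> V \<Longrightarrow> K x y = K y x"
    and "\<And>lam. finite {x. lam x \<noteq> 0} \<Longrightarrow> {x. lam x \<noteq> 0} \<subseteq> V \<Longrightarrow> {x. lam x \<noteq> 0} \<noteq> {} \<Longrightarrow>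
      (\<Sum>x\<in>{x. lam x \<noteq> 0}. lam x) = 0 \<Longrightarrow>
      qform lam {x. lam x \<noteq> 0} K \<in> \<real> \<and> Re (qform lam {x. lam x \<noteq> 0} K) < 0"
  shows "cond_strict_neg_def V K"
  using assms unfolding cond_strict_neg_def_def qform_def Let_def by blast

lemma qform_cong:
  "(\<And>x y. x \<in> S \<Longrightarrow> y \<in> S \<Longrightarrow> K x y = K' x y) \<Longrightarrow> qform lam S K = qform lam S K'"
  unfolding qform_def by simp

lemma qform_add: "qform lam S (\<lambda>x y. K x y + K' x y) = qform lam S K + qform lam S K'"
  unfolding qform_def by (simp add: distrib_left sum.distrib)

lemma qform_sum: "qform lam S (\<lambda>x y. \<Sum>u\<in>U. K u x y) = (\<Sum>u\<in>U. qform lam S (K u))"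
  unfolding qform_def by (simp add: of_real_sum sum_distrib_left sum.swap[of _ U])

definition fibre_sum :: "('x \<Rightarrow> complex) \<Rightarrow> 'x set \<Rightarrow> ('x \<Rightarrow> 'v) \<Rightarrow> 'v \<Rightarrow> complex" where
  "fibre_sum lam S f a = (\<Sum>x\<in>{x\<in>S. f x = a}. lam x)"

lemma sum_by_fibres:
  assumes "finite S"
  shows "(\<Sum>x\<in>S. lam x * g (f x)) = (\<Sum>a\<in>f ` S. fibre_sum lam S f a * g a)"
proof -
  have "(\<Sum>x\<in>S. lam x * g (f x)) = (\<Sum>a\<in>f ` S. \<Sum>x\<in>{x\<in>S. f x = a}. lam x * g (f x))"
    by (rule sum.image_gen[OF assms])
  then show ?thesis
    by (simp add: fibre_sum_def sum_distrib_right)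
qed

lemma qform_pushforward:
  assumes "finite S"
  shows "qform lam S (\<lambda>x y. K (f x) (f y)) = qform (fibre_sum lam S f) (f ` S) K"
proof -
  let ?mu = "fibre_sum lam S f"
  have cnj_mu: "fibre_sum (\<lambda>x. cnj (lam x)) S f = (\<lambda>a. cnj (?mu a))"
    by (simp add: fibre_sum_def fun_eq_iff)
  have inner: "(\<Sum>y\<in>S. cnj (lam y) * of_real (K a (f y)))
      = (\<Sum>b\<in>f ` S. cnj (?mu b) * of_real (K a b))" for a
    using sum_by_fibres[OF assms, of "\<lambda>y. cnj (lam y)" "\<lambda>b. of_real (K a b)"] cnj_mu by simp
  have "qform lam S (\<lambda>x y. K (f x) (f y))
      = (\<Sum>x\<in>S. lam x * (\<Sum>y\<in>S. cnj (lam y) * of_real (K (f x) (f y))))"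
    unfolding qform_def by (simp add: sum_distrib_left mult.assoc)
  also have "\<dots> = (\<Sum>x\<in>S. lam x * (\<Sum>b\<in>f ` S. cnj (?mu b) * of_real (K (f x) b)))"
    by (simp add: inner)
  also have "\<dots> = (\<Sum>a\<in>f ` S. ?mu a * (\<Sum>b\<in>f ` S. cnj (?mu b) * of_real (K a b)))"
    by (rule sum_by_fibres[OF assms])
  also have "\<dots> = qform ?mu (f ` S) K"
    unfolding qform_def by (simp add: sum_distrib_left mult.assoc)
  finally show ?thesis .
qed

lemma cond_strict_neg_def_qform:
  assumes "cond_strict_neg_def V K" "finite S" "S \<subseteq> V" "(\<Sum>x\<in>S. lam x) = 0"
  shows "qform lam S K \<in> \<real>" "Re (qform lam S K) \<le> 0"
    and "\<exists>x\<in>S. lam x \<noteq> 0 \<Longrightarrow> Re (qform lam S K) < 0"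
proof -
  define lam' where "lam' x = (if x \<in> S then lam x else 0)" for x
  define P where "P = {x. lam' x \<noteq> 0}"
  have P: "P \<subseteq> S" "finite P"
    using assms(2) finite_subset by (auto simp: P_def lam'_def)
  have "qform lam S K = qform lam' S K"
    by (simp add: qform_def lam'_def)
  also have "\<dots> = (\<Sum>x\<in>P. \<Sum>y\<in>S. lam' x * cnj (lam' y) * of_real (K x y))"
    unfolding qform_def using P by (intro sum.mono_neutral_right[OF assms(2)]) (auto simp: P_def)
  also have "\<dots> = qform lam' P K"
    unfolding qform_def using P
    by (intro sum.cong refl sum.mono_neutral_right[OF assms(2)]) (auto simp: P_def)
  finally have q: "qform lam S K = qform lam' P K" .
  have "(\<Sum>x\<in>P. lam' x) = 0"
    using assms(4) P by (subst sum.mono_neutral_left[of S]) (auto simp: P_def lam'_def assms(2))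
  then have neg: "P \<noteq> {} \<Longrightarrow> qform lam' P K \<in> \<real> \<and> Re (qform lam' P K) < 0"
    using assms(1,3) P unfolding cond_strict_neg_def_def qform_def Let_def P_def by blast
  have empty: "P = {} \<Longrightarrow> qform lam' P K = 0"
    by (simp add: qform_def)
  show "qform lam S K \<in> \<real>" "Re (qform lam S K) \<le> 0"
    using neg empty q by (cases "P = {}"; fastforce)+
  assume "\<exists>x\<in>S. lam x \<noteq> 0"
  then have "P \<noteq> {}"
    by (auto simp: P_def lam'_def)
  with neg q show "Re (qform lam S K) < 0"
    by simp
qed

lemma cond_strict_neg_def_pushforward:
  assumes "cond_strict_neg_def V K" "finite S" "f ` S \<subseteq> V" "(\<Sum>x\<in>S. lam x) = 0"
  shows "qform lam S (\<lambda>x y. K (f x) (f y)) \<in> \<real>" "Re (qform lam S (\<lambda>x y. K (f x) (f y))) \<le> 0"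
    and "fibre_sum lam S f a \<noteq> 0 \<Longrightarrow> Re (qform lam S (\<lambda>x y. K (f x) (f y))) < 0"
proof -
  have "(\<Sum>a\<in>f ` S. fibre_sum lam S f a) = 0"
    using sum_by_fibres[OF assms(2), of lam "\<lambda>_. 1"] assms(4) by simp
  note mu = cond_strict_neg_def_qform[OF assms(1) finite_imageI[OF assms(2)] assms(3) this]
  show "qform lam S (\<lambda>x y. K (f x) (f y)) \<in> \<real>" "Re (qform lam S (\<lambda>x y. K (f x) (f y))) \<le> 0"
    using mu(1,2) by (simp_all add: qform_pushforward[OF assms(2)])
  assume "fibre_sum lam S f a \<noteq> 0"
  then have "{x\<in>S. f x = a} \<noteq> {}"
    unfolding fibre_sum_def by (metis sum.empty)
  then have "a \<in> f ` S"
    by blast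
  then show "Re (qform lam S (\<lambda>x y. K (f x) (f y))) < 0"
    using mu(3) \<open>fibre_sum lam S f a \<noteq> 0\<close> by (auto simp: qform_pushforward[OF assms(2)])
qed

lemma sum_Re_neg:
  assumes "finite U" "u0 \<in> U" "\<And>u. u \<in> U \<Longrightarrow> q u \<in> \<real> \<and> Re (q u) \<le> 0" "Re (q u0) < 0"
  shows "sum q U \<in> \<real> \<and> Re (sum q U) < 0"
proof
  show "sum q U \<in> \<real>"
    using assms(3) by auto
  have "(\<Sum>u\<in>U - {u0}. Re (q u)) \<le> 0"
    using assms(3) by (auto intro: sum_nonpos)
  then show "Re (sum q U) < 0"
    using assms(4) by (simp add: sum.remove[OF assms(1,2)])
qed

primrec letter_before :: "'c list \<Rightarrow> 'c list \<Rightarrow> 'c option" where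
  "letter_before u [] = None"
| "letter_before u (c # x) = (if x = u then Some c else letter_before u x)"

lemma letter_before_eq_Some: "letter_before u x = Some c \<longleftrightarrow> suffix (c # u) x"
proof (induction x)
  case (Cons d x)
  have "\<not> suffix (c # x) x"
    using suffix_length_le by fastforce
  with Cons show ?case
    by (auto simp: suffix_Cons dest: suffix_ConsD)
qed simp

lemma letter_before_self [simp]: "letter_before u u = None"
  by (cases "letter_before u u") (auto simp: letter_before_eq_Some dest: suffix_length_le)

lemma letter_before_not_suffix: "\<not> suffix u x \<Longrightarrow> letter_before u x = None"
  by (cases "letter_before u x") (auto simp: letter_before_eq_Some dest: suffix_ConsD)

definition fp_proj1 :: "'a \<Rightarrow> ('a + 'b) list \<Rightarrow> ('a + 'b) list \<Rightarrow> 'a" where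
  "fp_proj1 v u x = (case letter_before u x of Some (Inl s) \<Rightarrow> s | _ \<Rightarrow> v)"

definition fp_proj2 :: "'b \<Rightarrow> ('a + 'b) list \<Rightarrow> ('a + 'b) list \<Rightarrow> 'b" where
  "fp_proj2 v u x = (case letter_before u x of Some (Inr s) \<Rightarrow> s | _ \<Rightarrow> v)"

lemma fp_proj1_eq_iff: "s \<noteq> v \<Longrightarrow> fp_proj1 v u x = s \<longleftrightarrow> suffix (Inl s # u) x"
  by (auto simp: fp_proj1_def letter_before_eq_Some[symmetric] split: option.split sum.split)

lemma fp_proj2_eq_iff: "s \<noteq> v \<Longrightarrow> fp_proj2 v u x = s \<longleftrightarrow> suffix (Inr s # u) x"
  by (auto simp: fp_proj2_def letter_before_eq_Some[symmetric] split: option.split sum.split)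

lemma fp_proj1_not_suffix: "\<not> suffix u x \<Longrightarrow> fp_proj1 v u x = v"
  by (simp add: fp_proj1_def letter_before_not_suffix)

lemma fp_proj2_not_suffix: "\<not> suffix u x \<Longrightarrow> fp_proj2 v u x = v"
  by (simp add: fp_proj2_def letter_before_not_suffix)

lemma fp_proj1_prefix1: "fp_proj1 v1 u (prefix1 v1 w z) = (if u = z then w else fp_proj1 v1 u z)"
  by (simp add: fp_proj1_def prefix1_def)

lemma fp_proj2_prefix1: "fp_proj2 v2 u (prefix1 v1 w z) = fp_proj2 v2 u z"
  by (simp add: fp_proj2_def prefix1_def)

lemma fp_proj2_prefix2: "fp_proj2 v2 u (prefix2 v2 w z) = (if u = z then w else fp_proj2 v2 u z)"
  by (simp add: fp_proj2_def prefix2_def)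

lemma fp_proj1_prefix2: "fp_proj1 v1 u (prefix2 v2 w z) = fp_proj1 v1 u z"
  by (simp add: fp_proj1_def prefix2_def)

lemma finite_longest_list:
  assumes "finite S" "S \<noteq> {}"
  obtains x where "x \<in> S" "\<And>y. y \<in> S \<Longrightarrow> length y \<le> length x"
proof -
  have "Max (length ` S) \<in> length ` S"
    using assms by simp
  then obtain x where "x \<in> S" "length x = Max (length ` S)"
    by auto
  with assms(1) show thesis
    by (intro that) auto
qed

lemma suffix_Cons_eqI: "suffix (c # u) y \<Longrightarrow> length y \<le> Suc (length u) \<Longrightarrow> y = c # u"
  by (auto simp: suffix_def)

lemma fp_proj1_Cons_split:
  assumes "length y \<le> Suc (length x)" "\<not> (\<exists>c'. y = c' # x \<and> isl c' = isl c)"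
  shows "fp_proj1 v u (c # x) = fp_proj1 v u x \<or> fp_proj1 v u x = fp_proj1 v u y"
proof (cases "u = x \<and> fp_proj1 v u y \<noteq> v")
  case True
  then have "y = Inl (fp_proj1 v u y) # x"
    using assms(1) fp_proj1_eq_iff suffix_Cons_eqI by metis
  with assms(2) have "\<not> isl c"
    by force
  with True show ?thesis
    by (cases c) (simp_all add: fp_proj1_def)
qed (auto simp: fp_proj1_def)

lemma fp_proj2_Cons_split:
  assumes "length y \<le> Suc (length x)" "\<not> (\<exists>c'. y = c' # x \<and> isl c' = isl c)"
  shows "fp_proj2 v u (c # x) = fp_proj2 v u x \<or> fp_proj2 v u x = fp_proj2 v u y"
proof (cases "u = x \<and> fp_proj2 v u y \<noteq> v")
  case True
  then have "y = Inr (fp_proj2 v u y) # x"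
    using assms(1) fp_proj2_eq_iff suffix_Cons_eqI by metis
  with assms(2) have "isl c"
    by force
  with True show ?thesis
    by (cases c) (simp_all add: fp_proj2_def)
qed (auto simp: fp_proj2_def)

lemma Cons_in_fp_vertices:
  "c # x \<in> fp_vertices V1 v1 V2 v2 \<longleftrightarrow> x \<in> fp_vertices V1 v1 V2 v2 \<and> (x = [] \<or> isl (hd x) \<noteq> isl c) \<and>
     (case c of Inl s \<Rightarrow> s \<in> V1 - {v1} | Inr s \<Rightarrow> s \<in> V2 - {v2})"
  unfolding fp_vertices_def by (cases x) (auto simp: All_less_Suc2 less_Suc_eq_0_disj)

lemma fp_proj1_in:
  "x \<in> fp_vertices V1 v1 V2 v2 \<Longrightarrow> v1 \<in> V1 \<Longrightarrow> fp_proj1 v1 u x \<in> V1"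
  by (induction x) (auto simp: Cons_in_fp_vertices fp_proj1_def split: sum.splits)

lemma fp_proj2_in:
  "x \<in> fp_vertices V1 v1 V2 v2 \<Longrightarrow> v2 \<in> V2 \<Longrightarrow> fp_proj2 v2 u x \<in> V2"
  by (induction x) (auto simp: Cons_in_fp_vertices fp_proj2_def split: sum.splits)

lemma prefix1_in_fp_vertices:
  "w \<in> V1 \<Longrightarrow> z \<in> fp_vertices V1 v1 V2 v2 \<Longrightarrow> z = [] \<or> \<not> isl (hd z) \<Longrightarrow>
    prefix1 v1 w z \<in> fp_vertices V1 v1 V2 v2"
  by (auto simp: prefix1_def Cons_in_fp_vertices)

lemma prefix2_in_fp_vertices:
  "w \<in> V2 \<Longrightarrow> z \<in> fp_vertices V1 v1 V2 v2 \<Longrightarrow> z = [] \<or> isl (hd z) \<Longrightarrow>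
    prefix2 v2 w z \<in> fp_vertices V1 v1 V2 v2"
  by (auto simp: prefix2_def Cons_in_fp_vertices)

locale free_product =
  fixes V1 :: "'a set" and E1 :: "'a set set" and v1 :: 'a
    and V2 :: "'b set" and E2 :: "'b set set" and v2 :: 'b
  assumes graph1: "graph V1 E1" and connected1: "connected_graph V1 E1" and root1: "v1 \<in> V1"
    and graph2: "graph V2 E2" and connected2: "connected_graph V2 E2" and root2: "v2 \<in> V2"
begin

abbreviation "FV \<equiv> fp_vertices V1 v1 V2 v2"
abbreviation "FE \<equiv> fp_edges V1 E1 v1 V2 E2 v2"

definition level_dist :: "('a + 'b) list \<Rightarrow> ('a + 'b) list \<Rightarrow> ('a + 'b) list \<Rightarrow> nat" where
  "level_dist u x y = path_dist E1 (fp_proj1 v1 u x) (fp_proj1 v1 u y)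
     + path_dist E2 (fp_proj2 v2 u x) (fp_proj2 v2 u y)"

definition word_dist :: "('a + 'b) list \<Rightarrow> ('a + 'b) list \<Rightarrow> nat" where
  "word_dist x y = (\<Sum>u \<in> set (suffixes x) \<union> set (suffixes y). level_dist u x y)"

lemma word_dist_eq_sum:
  assumes "finite U" "{u. suffix u x} \<union> {u. suffix u y} \<subseteq> U"
  shows "word_dist x y = (\<Sum>u\<in>U. level_dist u x y)"
  unfolding word_dist_def using assms
  by (intro sum.mono_neutral_left) (auto simp: level_dist_def fp_proj1_not_suffix fp_proj2_not_suffix)

lemma word_dist_refl [simp]: "word_dist x x = 0"
  by (simp add: word_dist_def level_dist_def)

lemma word_dist_commute: "word_dist x y = word_dist y x"
  unfolding word_dist_def level_dist_def by (simp add: Un_commute path_dist_commute)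

lemma word_dist_prefix1: "word_dist (prefix1 v1 s z) (prefix1 v1 t z) = path_dist E1 s t"
proof -
  have "word_dist (prefix1 v1 s z) (prefix1 v1 t z)
      = (\<Sum>u \<in> set (suffixes (prefix1 v1 s z)) \<union> set (suffixes (prefix1 v1 t z)).
           if u = z then path_dist E1 s t else 0)"
    unfolding word_dist_def level_dist_def
    by (intro sum.cong refl) (simp add: fp_proj1_prefix1 fp_proj2_prefix1)
  moreover have "suffix z (prefix1 v1 s z)"
    by (simp add: prefix1_def suffix_ConsI)
  ultimately show ?thesis
    by simp
qed

lemma word_dist_prefix2: "word_dist (prefix2 v2 s z) (prefix2 v2 t z) = path_dist E2 s t"
proof -
  have "word_dist (prefix2 v2 s z) (prefix2 v2 t z)
      = (\<Sum>u \<in> set (suffixes (prefix2 v2 s z)) \<union> set (suffixes (prefix2 v2 t z)).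
           if u = z then path_dist E2 s t else 0)"
    unfolding word_dist_def level_dist_def
    by (intro sum.cong refl) (simp add: fp_proj2_prefix2 fp_proj1_prefix2)
  moreover have "suffix z (prefix2 v2 s z)"
    by (simp add: prefix2_def suffix_ConsI)
  ultimately show ?thesis
    by simp
qed

lemma word_dist_triangle:
  assumes "x \<in> FV" "y \<in> FV" "z \<in> FV"
  shows "word_dist x z \<le> word_dist x y + word_dist y z"
proof -
  define U where "U = set (suffixes x) \<union> set (suffixes y) \<union> set (suffixes z)"
  have "level_dist u x z \<le> level_dist u x y + level_dist u y z" for u
  proof -
    have "path_dist E1 (fp_proj1 v1 u x) (fp_proj1 v1 u z)
        \<le> path_dist E1 (fp_proj1 v1 u x) (fp_proj1 v1 u y) + path_dist E1 (fp_proj1 v1 u y) (fp_proj1 v1 u z)"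
      using assms by (intro path_dist_triangle[OF connected1] fp_proj1_in[OF _ root1])
    moreover have "path_dist E2 (fp_proj2 v2 u x) (fp_proj2 v2 u z)
        \<le> path_dist E2 (fp_proj2 v2 u x) (fp_proj2 v2 u y) + path_dist E2 (fp_proj2 v2 u y) (fp_proj2 v2 u z)"
      using assms by (intro path_dist_triangle[OF connected2] fp_proj2_in[OF _ root2])
    ultimately show ?thesis
      unfolding level_dist_def by linarith
  qed
  then have "(\<Sum>u\<in>U. level_dist u x z) \<le> (\<Sum>u\<in>U. level_dist u x y) + (\<Sum>u\<in>U. level_dist u y z)"
    by (simp add: sum.distrib[symmetric] sum_mono)
  moreover have "word_dist a b = (\<Sum>u\<in>U. level_dist u a b)" if "a \<in> {x, y, z}" "b \<in> {x, y, z}" for a b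
    using that by (intro word_dist_eq_sum) (auto simp: U_def)
  ultimately show ?thesis
    by simp
qed

lemma word_dist_Cons_split:
  assumes "length y \<le> Suc (length x)" "\<not> (\<exists>c'. y = c' # x \<and> isl c' = isl c)"
  shows "word_dist (c # x) y = word_dist (c # x) x + word_dist x y"
proof -
  define U where "U = set (suffixes (c # x)) \<union> set (suffixes y)"
  have split: "a = b \<or> b = d \<Longrightarrow> path_dist E a d = path_dist E a b + path_dist E b d" for E a b d
    by auto
  have "level_dist u (c # x) y = level_dist u (c # x) x + level_dist u x y" for u
    unfolding level_dist_def
    using split[OF fp_proj1_Cons_split[OF assms]] split[OF fp_proj2_Cons_split[OF assms]] by simp
  moreover have "word_dist a b = (\<Sum>u\<in>U. level_dist u a b)" if "a \<in> {c # x, x, y}" "b \<in> {c # x, x, y}" for a b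
    using that by (intro word_dist_eq_sum) (auto simp: U_def suffix_Cons)
  ultimately show ?thesis
    by (simp add: sum.distrib)
qed

lemma fp_edge_cases:
  assumes "{a, b} \<in> FE"
  obtains w w' z where "{w, w'} \<in> E1" "z \<in> FV" "z = [] \<or> \<not> isl (hd z)"
      "a = prefix1 v1 w z" "b = prefix1 v1 w' z"
  | w w' z where "{w, w'} \<in> E2" "z \<in> FV" "z = [] \<or> isl (hd z)"
      "a = prefix2 v2 w z" "b = prefix2 v2 w' z"
proof -
  have swap: "{w, w'} \<in> E \<Longrightarrow> {w', w} \<in> E" for w w' and E :: "'c set set"
    by (simp add: insert_commute)
  from assms consider
      (left) w w' z where "{w, w'} \<in> E1" "z \<in> FV" "z = [] \<or> \<not> isl (hd z)"
        "{a, b} = {prefix1 v1 w z, prefix1 v1 w' z}"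
    | (right) w w' z where "{w, w'} \<in> E2" "z \<in> FV" "z = [] \<or> isl (hd z)"
        "{a, b} = {prefix2 v2 w z, prefix2 v2 w' z}"
    unfolding fp_edges_def by blast
  then show thesis
  proof cases
    case left
    then have "(a, b) = (prefix1 v1 w z, prefix1 v1 w' z) \<or> (a, b) = (prefix1 v1 w' z, prefix1 v1 w z)"
      by (auto simp: doubleton_eq_iff)
    with left that(1) swap[of _ _ E1] show thesis
      by blast
  next
    case right
    then have "(a, b) = (prefix2 v2 w z, prefix2 v2 w' z) \<or> (a, b) = (prefix2 v2 w' z, prefix2 v2 w z)"
      by (auto simp: doubleton_eq_iff)
    with right that(2) swap[of _ _ E2] show thesis
      by blast
  qed
qed

lemma fp_edge_word_dist:
  assumes "{a, b} \<in> FE"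
  shows "a \<in> FV \<and> b \<in> FV \<and> word_dist a b \<le> 1"
  using assms
proof (cases rule: fp_edge_cases)
  case 1
  then show ?thesis
    using graph_edge_in_vertices[OF graph1 1(1)] path_dist_edge[OF 1(1)]
    by (simp add: prefix1_in_fp_vertices word_dist_prefix1)
next
  case 2
  then show ?thesis
    using graph_edge_in_vertices[OF graph2 2(1)] path_dist_edge[OF 2(1)]
    by (simp add: prefix2_in_fp_vertices word_dist_prefix2)
qed

lemma word_dist_le_walk: "has_walk FE x y n \<Longrightarrow> x \<in> FV \<Longrightarrow> word_dist x y \<le> n"
  by (rule has_walk_bound[of FE FV word_dist, OF fp_edge_word_dist _ word_dist_triangle]) auto

lemma has_walk_prefix1:
  assumes "s \<in> V1" "t \<in> V1" "z \<in> FV" "z = [] \<or> \<not> isl (hd z)"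
  shows "has_walk FE (prefix1 v1 s z) (prefix1 v1 t z) (word_dist (prefix1 v1 s z) (prefix1 v1 t z))"
  unfolding word_dist_prefix1
proof (rule has_walk_map[OF connected_graph_has_walk[OF connected1 assms(1,2)]])
  show "{prefix1 v1 a z, prefix1 v1 b z} \<in> FE" if "{a, b} \<in> E1" for a b
    using that assms(3,4) unfolding fp_edges_def by blast
qed

lemma has_walk_prefix2:
  assumes "s \<in> V2" "t \<in> V2" "z \<in> FV" "z = [] \<or> isl (hd z)"
  shows "has_walk FE (prefix2 v2 s z) (prefix2 v2 t z) (word_dist (prefix2 v2 s z) (prefix2 v2 t z))"
  unfolding word_dist_prefix2
proof (rule has_walk_map[OF connected_graph_has_walk[OF connected2 assms(1,2)]])
  show "{prefix2 v2 a z, prefix2 v2 b z} \<in> FE" if "{a, b} \<in> E2" for a b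
    using that assms(3,4) unfolding fp_edges_def by blast
qed

lemma has_walk_same_level:
  assumes "c # z \<in> FV" "y \<in> FV" "y = z \<or> (\<exists>c'. y = c' # z \<and> isl c' = isl c)"
  shows "has_walk FE (c # z) y (word_dist (c # z) y)"
proof (cases c)
  case (Inl s)
  then have "c # z = prefix1 v1 s z" "s \<in> V1" "z \<in> FV" "z = [] \<or> \<not> isl (hd z)"
    using assms(1) by (auto simp: Cons_in_fp_vertices prefix1_def)
  moreover obtain t where "t \<in> V1" "y = prefix1 v1 t z"
    using assms(2,3) root1 Inl by (auto simp: Cons_in_fp_vertices prefix1_def isl_def split: sum.splits)
  ultimately show ?thesis
    using has_walk_prefix1 by simp
next
  case (Inr s)
  then have "c # z = prefix2 v2 s z" "s \<in> V2" "z \<in> FV" "z = [] \<or> isl (hd z)"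
    using assms(1) by (auto simp: Cons_in_fp_vertices prefix2_def)
  moreover obtain t where "t \<in> V2" "y = prefix2 v2 t z"
    using assms(2,3) root2 Inr by (auto simp: Cons_in_fp_vertices prefix2_def isl_def split: sum.splits)
  ultimately show ?thesis
    using has_walk_prefix2 by simp
qed


lemma has_walk_word_dist: "x \<in> FV \<Longrightarrow> y \<in> FV \<Longrightarrow> has_walk FE x y (word_dist x y)"
proof (induction "length x + length y" arbitrary: x y rule: less_induct)
  case less
  have longer: "has_walk FE a b (word_dist a b)"
    if "a \<in> FV" "b \<in> FV" "length b \<le> length a" "length a + length b = length x + length y" for a b
  proof (cases "a = b")
    case True
    then show ?thesis
      by (simp add: has_walk_refl)
  next
    case False
    with that(3) obtain c z where a: "a = c # z"
      by (cases a) auto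
    show ?thesis
    proof (cases "\<exists>c'. b = c' # z \<and> isl c' = isl c")
      case True
      then show ?thesis
        using has_walk_same_level that(1,2) a by simp
    next
      case False
      have "z \<in> FV"
        using that(1) a by (simp add: Cons_in_fp_vertices)
      then have "has_walk FE a z (word_dist a z)" "has_walk FE z b (word_dist z b)"
        using has_walk_same_level[of c z z] less.hyps[of z b] that a by simp_all
      moreover have "word_dist a b = word_dist a z + word_dist z b"
        using word_dist_Cons_split[of b z c] False that(3) a by simp
      ultimately show ?thesis
        using has_walk_trans by metis
    qed
  qed
  show ?case
  proof (cases "length y \<le> length x")
    case True
    with longer less.prems show ?thesis
      by simp
  next
    case False
    then have "has_walk FE y x (word_dist y x)"
      using longer less.prems by simp
    then show ?thesis
      using has_walk_sym word_dist_commute by metis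
  qed
qed

lemma path_dist_fp_eq_word_dist: "x \<in> FV \<Longrightarrow> y \<in> FV \<Longrightarrow> path_dist FE x y = word_dist x y"
  by (rule path_dist_eqI[OF has_walk_word_dist]) (simp_all add: word_dist_le_walk)

lemma qform_path_dist_levels:
  assumes "finite S" "S \<subseteq> FV"
  shows "qform lam S (\<lambda>x y. real (path_dist FE x y))
    = (\<Sum>u\<in>(\<Union>x\<in>S. set (suffixes x)). qform lam S (\<lambda>x y. real (level_dist u x y)))"
proof -
  have "real (path_dist FE x y) = (\<Sum>u\<in>(\<Union>x\<in>S. set (suffixes x)). real (level_dist u x y))"
    if "x \<in> S" "y \<in> S" for x y
  proof -
    have "path_dist FE x y = word_dist x y"
      using that assms(2) path_dist_fp_eq_word_dist by blast
    also have "\<dots> = (\<Sum>u\<in>(\<Union>x\<in>S. set (suffixes x)). level_dist u x y)"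
      using that assms(1) by (intro word_dist_eq_sum) auto
    finally show ?thesis
      by simp
  qed
  then have "qform lam S (\<lambda>x y. real (path_dist FE x y))
      = qform lam S (\<lambda>x y. \<Sum>u\<in>(\<Union>x\<in>S. set (suffixes x)). real (level_dist u x y))"
    by (rule qform_cong)
  then show ?thesis
    by (simp only: qform_sum)
qed

lemma qform_level_dist:
  "qform lam S (\<lambda>x y. real (level_dist u x y)) =
     qform lam S (\<lambda>x y. real (path_dist E1 (fp_proj1 v1 u x) (fp_proj1 v1 u y)))
   + qform lam S (\<lambda>x y. real (path_dist E2 (fp_proj2 v2 u x) (fp_proj2 v2 u y)))"
  by (simp add: level_dist_def qform_add[symmetric])

end

locale free_product_cnd = free_product +
  assumes cnd1: "cond_strict_neg_def V1 (\<lambda>x y. real (path_dist E1 x y))"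
    and cnd2: "cond_strict_neg_def V2 (\<lambda>x y. real (path_dist E2 x y))"
begin

lemma qform_level_dist_nonpos:
  assumes "finite S" "S \<subseteq> FV" "(\<Sum>x\<in>S. lam x) = 0"
  shows "qform lam S (\<lambda>x y. real (level_dist u x y)) \<in> \<real> \<and>
    Re (qform lam S (\<lambda>x y. real (level_dist u x y))) \<le> 0"
proof -
  have "fp_proj1 v1 u ` S \<subseteq> V1" "fp_proj2 v2 u ` S \<subseteq> V2"
    using assms(2) by (auto intro: fp_proj1_in[OF _ root1] fp_proj2_in[OF _ root2])
  note cond_strict_neg_def_pushforward[OF cnd1 assms(1) this(1) assms(3)]
    cond_strict_neg_def_pushforward[OF cnd2 assms(1) this(2) assms(3)]
  then show ?thesis
    by (simp add: qform_level_dist)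
qed

lemma qform_level_dist_neg:
  assumes "finite S" "S \<subseteq> FV" "(\<Sum>x\<in>S. lam x) = 0"
    and "c # u \<in> S" "lam (c # u) \<noteq> 0" "\<And>y. y \<in> S \<Longrightarrow> length y \<le> Suc (length u)"
  shows "Re (qform lam S (\<lambda>x y. real (level_dist u x y))) < 0"
proof -
  have "fp_proj1 v1 u ` S \<subseteq> V1" "fp_proj2 v2 u ` S \<subseteq> V2"
    using assms(2) by (auto intro: fp_proj1_in[OF _ root1] fp_proj2_in[OF _ root2])
  note q1 = cond_strict_neg_def_pushforward[OF cnd1 assms(1) this(1) assms(3)]
    and q2 = cond_strict_neg_def_pushforward[OF cnd2 assms(1) this(2) assms(3)]
  have "c # u \<in> FV"
    using assms(2,4) by blast
  then have c: "case c of Inl s \<Rightarrow> s \<in> V1 - {v1} | Inr s \<Rightarrow> s \<in> V2 - {v2}"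
    by (simp add: Cons_in_fp_vertices)
  show ?thesis
  proof (cases c)
    case (Inl s)
    have "s \<noteq> v1"
      using c Inl by simp
    then have "{y\<in>S. fp_proj1 v1 u y = s} = {c # u}"
      using assms(4,6) Inl by (auto simp: fp_proj1_eq_iff dest: suffix_Cons_eqI)
    then have "Re (qform lam S (\<lambda>x y. real (path_dist E1 (fp_proj1 v1 u x) (fp_proj1 v1 u y)))) < 0"
      using q1(3)[of s] assms(5) by (simp add: fibre_sum_def)
    with q2(2) show ?thesis
      by (simp add: qform_level_dist)
  next
    case (Inr s)
    have "s \<noteq> v2"
      using c Inr by simp
    then have "{y\<in>S. fp_proj2 v2 u y = s} = {c # u}"
      using assms(4,6) Inr by (auto simp: fp_proj2_eq_iff dest: suffix_Cons_eqI)
    then have "Re (qform lam S (\<lambda>x y. real (path_dist E2 (fp_proj2 v2 u x) (fp_proj2 v2 u y)))) < 0"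
      using q2(3)[of s] assms(5) by (simp add: fibre_sum_def)
    with q1(2) show ?thesis
      by (simp add: qform_level_dist)
  qed
qed

lemma qform_path_dist_neg:
  assumes "finite S" "S \<subseteq> FV" "S \<noteq> {}" "\<And>x. x \<in> S \<Longrightarrow> lam x \<noteq> 0" "(\<Sum>x\<in>S. lam x) = 0"
  shows "qform lam S (\<lambda>x y. real (path_dist FE x y)) \<in> \<real> \<and>
    Re (qform lam S (\<lambda>x y. real (path_dist FE x y))) < 0"
proof -
  define U where "U = (\<Union>x\<in>S. set (suffixes x))"
  have "finite U"
    using assms(1) by (simp add: U_def)
  note decomp = qform_path_dist_levels[OF assms(1,2), folded U_def]
  obtain x0 where "x0 \<in> S" and longest: "\<And>y. y \<in> S \<Longrightarrow> length y \<le> length x0"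
    using finite_longest_list[OF assms(1,3)] by blast
  have "x0 \<noteq> []"
  proof
    assume "x0 = []"
    then have "S = {[]}"
      using \<open>x0 \<in> S\<close> longest by fastforce
    then show False
      using assms(4,5) by simp
  qed
  then obtain c u where "x0 = c # u"
    by (cases x0) auto
  then have "u \<in> U"
    using \<open>x0 \<in> S\<close> by (auto simp: U_def intro!: bexI[of _ x0] suffix_ConsI)
  have "length y \<le> Suc (length u)" if "y \<in> S" for y
    using longest[OF that] \<open>x0 = c # u\<close> by simp
  then have "Re (qform lam S (\<lambda>x y. real (level_dist u x y))) < 0"
    using qform_level_dist_neg[OF assms(1,2,5)] \<open>x0 \<in> S\<close> \<open>x0 = c # u\<close> assms(4) by blast
  with qform_level_dist_nonpos[OF assms(1,2,5)] show ?thesis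
    unfolding decomp
    by (intro sum_Re_neg[OF \<open>finite U\<close> \<open>u \<in> U\<close>,
          where q = "\<lambda>u. qform lam S (\<lambda>x y. real (level_dist u x y))"])
qed

lemma cond_strict_neg_def_fp: "cond_strict_neg_def FV (\<lambda>x y. real (path_dist FE x y))"
proof (rule cond_strict_neg_defI)
  show "real (path_dist FE x y) = real (path_dist FE y x)" for x y
    by (simp add: path_dist_commute)
  show "qform lam {x. lam x \<noteq> 0} (\<lambda>x y. real (path_dist FE x y)) \<in> \<real> \<and>
      Re (qform lam {x. lam x \<noteq> 0} (\<lambda>x y. real (path_dist FE x y))) < 0"
    if "finite {x. lam x \<noteq> 0}" "{x. lam x \<noteq> 0} \<subseteq> FV" "{x. lam x \<noteq> 0} \<noteq> {}"
      "(\<Sum>x\<in>{x. lam x \<noteq> 0}. lam x) = 0" for lam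
    using that by (intro qform_path_dist_neg) auto
qed

end

theorem mainTheorem9:
  fixes V1 :: "'a set" and E1 :: "'a set set" and v1 :: 'a
    and V2 :: "'b set" and E2 :: "'b set set" and v2 :: 'b
  assumes "graph V1 E1" and "connected_graph V1 E1" and "v1 \<in> V1"
    and "graph V2 E2" and "connected_graph V2 E2" and "v2 \<in> V2"
    and "cond_strict_neg_def V1 (\<lambda>x y. real (path_dist E1 x y))"
    and "cond_strict_neg_def V2 (\<lambda>x y. real (path_dist E2 x y))"
  shows "cond_strict_neg_def (fp_vertices V1 v1 V2 v2)
           (\<lambda>x y. real (path_dist (fp_edges V1 E1 v1 V2 E2 v2) x y))"
proof -
  interpret free_product_cnd V1 E1 v1 V2 E2 v2
    using assms by unfold_locales
  show ?thesis
    by (rule cond_strict_neg_def_fp)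
qed

end
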